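(* Let $P_1$ be the uniform distribution on $[0,\frac12]$, let $P_2$ be the uniform distribution on $[\frac34,1]$, and let $P=\frac34P_1+\frac14P_2$. For $n\ge 2$, let $\alpha_n$ be an optimal set of $n$-means for $P$. Then $\alpha_n$ does not contain any point from the open interval $(\frac12,\frac34)$.
   Context: For a finite set $\alpha\subset\mathbb R$, $V(P;\alpha)=\int\min_{a\in\alpha}(x-a)^2\,dP(x)$; $V_n=\inf\{V(P;\alpha):\mathrm{card}(\alpha)\le n\}$; an optimal set of $n$-means is a set $\alpha$ with $\mathrm{card}(\alpha)\le n$ and $V(P;\alpha)=V_n$. *)

theory Defs
  imports "HOL-Probability.Probability"
begin

definition unif_dens :: "real \<Rightarrow> real \<Rightarrow> real \<Rightarrow> real" where
  "unif_dens a b x = indicator {a..b} x / (b - a)"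

definition P :: "real measure" where
  "P = density lborel (\<lambda>x. ennreal (3/4 * unif_dens 0 (1/2) x + 1/4 * unif_dens (3/4) 1 x))"

definition distortion :: "real measure \<Rightarrow> real set \<Rightarrow> real" where
  "distortion M \<alpha> = (\<integral>x. Min ((\<lambda>a. (x - a)\<^sup>2) ` \<alpha>) \<partial>M)"

definition nth_quant_error :: "real measure \<Rightarrow> nat \<Rightarrow> real" where
  "nth_quant_error M n =
     Inf {distortion M \<beta> | \<beta>. finite \<beta> \<and> \<beta> \<noteq> {} \<and> card \<beta> \<le> n}"

definition optimal_n_means :: "real measure \<Rightarrow> nat \<Rightarrow> real set \<Rightarrow> bool" where
  "optimal_n_means M n \<alpha> \<longleftrightarrow> finite \<alpha> \<and> \<alpha> \<noteq> {} \<and> card \<alpha> \<le> n \<and>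
     distortion M \<alpha> = nth_quant_error M n"

end

theory Submission
  imports Defs
begin

text \<open>
  The distortion of a finite set \<open>\<beta>\<close> is \<open>3/2 E\<^sub>A + E\<^sub>B\<close>, where \<open>E\<^sub>A\<close> and \<open>E\<^sub>B\<close> integrate the
  squared distance to \<open>\<beta>\<close> over \<open>[0,1/2]\<close> and \<open>[3/4,1]\<close>.  On an interval of length \<open>L\<close>,
  \<open>k\<close> equally spaced points achieve \<open>L\<^sup>3/(3(2k)\<^sup>2)\<close>.  Conversely, if \<open>\<beta>\<close> has \<open>k\<close> points in
  the interval and points on \<open>s\<close> of its sides outside it, the points farther than \<open>t\<close> from \<open>\<beta>\<close>
  have measure at least \<open>L - (2k + s) t\<close>, and the layer-cake formula gives the error bound
  \<open>L\<^sup>3/(3(2k + s)\<^sup>2)\<close>.  A point in the gap \<open>(1/2,3/4)\<close> thus only counts as a "half point" for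
  each of the two intervals, so replacing it (together with any other point outside the two
  intervals) by points placed inside them strictly lowers the distortion.  When the gap point
  is the only point outside, the few configurations where this count is too coarse are settled
  by sharper bounds that use its distance of at least \<open>1/8\<close> from one of the intervals.
\<close>

section \<open>Distance to a finite set and the distortion of P\<close>

lemma infdist_power2_le:
  fixes x a :: real
  assumes "a \<in> A"
  shows "(infdist x A)\<^sup>2 \<le> (x - a)\<^sup>2"
  using power_mono[OF infdist_le[OF assms] infdist_nonneg, where n=2] by (simp add: dist_real_def)

lemma Min_power2_diff_eq_infdist:
  fixes \<beta> :: "real set"
  assumes "finite \<beta>" "\<beta> \<noteq> {}"
  shows "Min ((\<lambda>a. (x - a)\<^sup>2) ` \<beta>) = (infdist x \<beta>)\<^sup>2"
proof (rule Min_eqI)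
  obtain b where "b \<in> \<beta>" "infdist x \<beta> = dist x b"
    using infdist_attains_inf[OF finite_imp_closed] assms by metis
  then show "(infdist x \<beta>)\<^sup>2 \<in> (\<lambda>a. (x - a)\<^sup>2) ` \<beta>"
    by (auto simp: dist_real_def)
  show "(infdist x \<beta>)\<^sup>2 \<le> y" if "y \<in> (\<lambda>a. (x - a)\<^sup>2) ` \<beta>" for y
    using that infdist_power2_le by auto
qed (use assms in auto)

lemma borel_measurable_infdist [measurable]: "(\<lambda>x::real. infdist x \<beta>) \<in> borel_measurable borel"
  by (intro borel_measurable_continuous_onI continuous_intros)

lemma distortion_nonneg:
  assumes "finite \<beta>" "\<beta> \<noteq> {}"
  shows "0 \<le> distortion M \<beta>"
  unfolding distortion_def using assms by (intro Bochner_Integration.integral_nonneg) (simp add: Min_ge_iff)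

lemma nth_quant_error_le_distortion:
  assumes "finite \<beta>" "\<beta> \<noteq> {}" "card \<beta> \<le> n"
  shows "nth_quant_error M n \<le> distortion M \<beta>"
  unfolding nth_quant_error_def
proof (rule cInf_lower)
  show "distortion M \<beta> \<in> {distortion M \<beta> |\<beta>. finite \<beta> \<and> \<beta> \<noteq> {} \<and> card \<beta> \<le> n}"
    using assms by blast
  show "bdd_below {distortion M \<beta> |\<beta>. finite \<beta> \<and> \<beta> \<noteq> {} \<and> card \<beta> \<le> n}"
    using distortion_nonneg by (intro bdd_belowI[of _ 0]) blast
qed

definition interval_error :: "real set \<Rightarrow> real \<Rightarrow> real \<Rightarrow> real" where
  "interval_error \<beta> p q = (\<integral>x\<in>{p..q}. (infdist x \<beta>)\<^sup>2 \<partial>lborel)"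

lemma set_integrable_infdist_power2:
  "set_integrable lborel {p..q} (\<lambda>x::real. (infdist x \<beta>)\<^sup>2)"
  by (intro borel_integrable_atLeastAtMost' continuous_intros)

lemma interval_error_nonneg: "0 \<le> interval_error \<beta> p q"
  unfolding interval_error_def set_lebesgue_integral_def by simp

lemma ennreal_interval_error:
  "ennreal (interval_error \<beta> p q) = (\<integral>\<^sup>+x\<in>{p..q}. ennreal ((infdist x \<beta>)\<^sup>2) \<partial>lborel)"
  unfolding interval_error_def set_lebesgue_integral_def
  using set_integrable_infdist_power2[unfolded set_integrable_def]
  by (subst nn_integral_eq_integral[symmetric]) (auto intro!: nn_integral_cong split: split_indicator)

lemma interval_error_antimono:
  assumes "\<beta> \<subseteq> \<gamma>" "\<beta> \<noteq> {}"
  shows "interval_error \<gamma> p q \<le> interval_error \<beta> p q"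
  unfolding interval_error_def using infdist_mono[OF assms]
  by (intro set_integral_mono set_integrable_infdist_power2 power_mono infdist_nonneg)

lemma distortion_P_eq:
  fixes \<beta> :: "real set"
  assumes "finite \<beta>" "\<beta> \<noteq> {}"
  shows "distortion P \<beta> = 3/2 * interval_error \<beta> 0 (1/2) + interval_error \<beta> (3/4) 1"
proof -
  define g where "g x = 3/4 * unif_dens 0 (1/2) x + 1/4 * unif_dens (3/4) 1 x" for x :: real
  have [measurable]: "g \<in> borel_measurable borel"
    unfolding g_def unif_dens_def by measurable
  have "distortion P \<beta> = (\<integral>x. g x * (infdist x \<beta>)\<^sup>2 \<partial>lborel)"
    unfolding distortion_def Min_power2_diff_eq_infdist[OF assms] P_def g_def[symmetric]
    by (subst integral_density) (auto simp: g_def unif_dens_def)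
  also have "\<dots> = (\<integral>x. 3/2 * (indicator {0..1/2} x *\<^sub>R (infdist x \<beta>)\<^sup>2)
                       + indicator {3/4..1} x *\<^sub>R (infdist x \<beta>)\<^sup>2 \<partial>lborel)"
    by (intro Bochner_Integration.integral_cong) (auto simp: g_def unif_dens_def indicator_def)
  also have "\<dots> = 3/2 * interval_error \<beta> 0 (1/2) + interval_error \<beta> (3/4) 1"
    using set_integrable_infdist_power2 unfolding interval_error_def set_lebesgue_integral_def set_integrable_def
    by simp
  finally show ?thesis .
qed

lemma set_integral_power2_diff:
  fixes a b c :: real
  assumes "a \<le> b"
  shows "(\<integral>x\<in>{a..b}. (x - c)\<^sup>2 \<partial>lborel) = ((b - c) ^ 3 - (a - c) ^ 3) / 3"
  unfolding set_lebesgue_integral_def using assms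
  by (subst integral_FTC_atLeastAtMost[where F = "\<lambda>x. (x - c) ^ 3 / 3"])
     (auto intro!: derivative_eq_intros continuous_intros simp flip: has_real_derivative_iff_has_vector_derivative
           simp: power2_eq_square diff_divide_distrib)

section \<open>Equally spaced points\<close>

text \<open>\<open>half_cell_bound L e\<close> is the error of \<open>e\<close> half-cells of length \<open>L/e\<close>, each costing
  \<open>(L/e)\<^sup>3/3\<close>; \<open>k\<close> equally spaced points in an interval cut it into \<open>2k\<close> such half-cells.\<close>
definition half_cell_bound :: "real \<Rightarrow> real \<Rightarrow> real" where
  "half_cell_bound L e = L ^ 3 / (3 * e\<^sup>2)"

lemma half_cell_bound_antimono:
  assumes "0 < e" "e \<le> e'" "0 \<le> L"
  shows "half_cell_bound L e' \<le> half_cell_bound L e"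
  unfolding half_cell_bound_def using assms
  by (intro divide_left_mono mult_left_mono power_mono) auto

lemma half_cell_bound_strict_antimono:
  assumes "0 < e" "e < e'" "0 < L"
  shows "half_cell_bound L e' < half_cell_bound L e"
  unfolding half_cell_bound_def using assms
  by (intro divide_strict_left_mono mult_strict_left_mono power_strict_mono) auto

definition cell_midpoints :: "real \<Rightarrow> real \<Rightarrow> nat \<Rightarrow> real set" where
  "cell_midpoints p L k = (\<lambda>i. p + (real i + 1/2) * (L / k)) ` {..<k}"

lemma finite_cell_midpoints: "finite (cell_midpoints p L k)"
  unfolding cell_midpoints_def by simp

lemma cell_midpoints_nonempty: "0 < k \<Longrightarrow> cell_midpoints p L k \<noteq> {}"
  unfolding cell_midpoints_def by auto

lemma card_cell_midpoints_le: "card (cell_midpoints p L k) \<le> k"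
  unfolding cell_midpoints_def using card_image_le[of "{..<k}"] by simp

lemma interval_covered_by_cells:
  fixes w x :: real
  assumes "0 < w" "0 < k" "p \<le> x" "x \<le> p + real k * w"
  obtains i where "i < k" "p + real i * w \<le> x" "x \<le> p + (real i + 1) * w"
  using assms(2,4)
proof (induction k)
  case (Suc k)
  show ?case
  proof (cases "0 < k \<and> x \<le> p + real k * w")
    case True
    then show ?thesis using Suc.IH Suc.prems(1) by (meson less_SucI)
  next
    case False
    then show ?thesis using Suc.prems(1)[of k] Suc.prems(3) assms(3) by (auto simp: algebra_simps)
  qed
qed simp

lemma interval_error_cell_midpoints_le:
  assumes "0 < L" "0 < k"
  shows "interval_error (cell_midpoints p L k) p (p + L) \<le> half_cell_bound L (2 * real k)"
proof -
  define w where "w = L / k"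
  define c where "c i = p + (real i + 1/2) * w" for i :: nat
  have w: "0 < w" "p + L = p + real k * w"
    using assms by (auto simp: w_def)
  let ?cell = "\<lambda>i x. indicator {c i - w/2..c i + w/2} x *\<^sub>R (x - c i)\<^sup>2"
  have pointwise: "indicator {p..p + L} x *\<^sub>R (infdist x (cell_midpoints p L k))\<^sup>2 \<le> (\<Sum>i<k. ?cell i x)"
    for x :: real
  proof (cases "x \<in> {p..p + L}")
    case True
    then obtain i where i: "i < k" "p + real i * w \<le> x" "x \<le> p + (real i + 1) * w"
      using interval_covered_by_cells[OF w(1) assms(2), of p x] w(2) by auto
    have "c i \<in> cell_midpoints p L k"
      using i(1) by (auto simp: cell_midpoints_def c_def w_def)
    then have "(infdist x (cell_midpoints p L k))\<^sup>2 \<le> (x - c i)\<^sup>2"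
      by (rule infdist_power2_le)
    also have "\<dots> = ?cell i x"
      using i by (auto simp: c_def algebra_simps)
    also have "\<dots> \<le> (\<Sum>i<k. ?cell i x)"
      using i(1) by (intro member_le_sum) auto
    finally show ?thesis using True by simp
  qed (auto intro: sum_nonneg)
  have cell_integrable: "integrable lborel (?cell i)" for i
    using borel_integrable_atLeastAtMost'[of "c i - w/2" "c i + w/2" "\<lambda>x. (x - c i)\<^sup>2"]
    by (simp add: set_integrable_def continuous_intros)
  have "interval_error (cell_midpoints p L k) p (p + L) \<le> (\<integral>x. (\<Sum>i<k. ?cell i x) \<partial>lborel)"
    unfolding interval_error_def set_lebesgue_integral_def
    using set_integrable_infdist_power2[unfolded set_integrable_def]
    by (intro integral_mono pointwise Bochner_Integration.integrable_sum cell_integrable)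
  also have "\<dots> = (\<Sum>i<k. (\<integral>x\<in>{c i - w/2..c i + w/2}. (x - c i)\<^sup>2 \<partial>lborel))"
    unfolding set_lebesgue_integral_def using cell_integrable by (rule Bochner_Integration.integral_sum)
  also have "\<dots> = (\<Sum>i<k. w ^ 3 / 12)"
    using w(1) by (simp add: set_integral_power2_diff power3_eq_cube)
  also have "\<dots> = half_cell_bound L (2 * real k)"
    using assms by (simp add: w_def half_cell_bound_def field_simps power3_eq_cube power2_eq_square)
  finally show ?thesis .
qed

lemma nth_quant_error_P_le:
  assumes "0 < k1" "0 < k2" "k1 + k2 \<le> n"
  shows "nth_quant_error P n \<le> 3/2 * half_cell_bound (1/2) (2 * real k1) + half_cell_bound (1/4) (2 * real k2)"
proof -
  define A where "A = cell_midpoints 0 (1/2) k1"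
  define B where "B = cell_midpoints (3/4) (1/4) k2"
  have A: "finite A" "A \<noteq> {}" "card A \<le> k1"
    unfolding A_def using assms by (auto simp: finite_cell_midpoints cell_midpoints_nonempty card_cell_midpoints_le)
  have B: "finite B" "B \<noteq> {}" "card B \<le> k2"
    unfolding B_def using assms by (auto simp: finite_cell_midpoints cell_midpoints_nonempty card_cell_midpoints_le)
  have "card (A \<union> B) \<le> n"
    using card_Un_le[of A B] A B assms(3) by linarith
  then have "nth_quant_error P n \<le> distortion P (A \<union> B)"
    using A B by (intro nth_quant_error_le_distortion) auto
  also have "\<dots> = 3/2 * interval_error (A \<union> B) 0 (1/2) + interval_error (A \<union> B) (3/4) 1"
    using A B by (intro distortion_P_eq) auto
  also have "\<dots> \<le> 3/2 * interval_error A 0 (1/2) + interval_error B (3/4) 1"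
    using A B by (intro add_mono mult_left_mono interval_error_antimono) auto
  also have "\<dots> \<le> 3/2 * half_cell_bound (1/2) (2 * real k1) + half_cell_bound (1/4) (2 * real k2)"
    using interval_error_cell_midpoints_le[of "1/2" k1 0] interval_error_cell_midpoints_le[of "1/4" k2 "3/4"]
    unfolding A_def B_def using assms by simp
  finally show ?thesis .
qed

lemma nth_quant_error_P_less_distortion:
  fixes \<alpha> :: "real set"
  assumes "finite \<alpha>" "\<alpha> \<noteq> {}" "0 < k1" "0 < k2" "k1 + k2 \<le> n"
    and "3/2 * half_cell_bound (1/2) (2 * real k1) + half_cell_bound (1/4) (2 * real k2)
           < 3/2 * interval_error \<alpha> 0 (1/2) + interval_error \<alpha> (3/4) 1"
  shows "nth_quant_error P n < distortion P \<alpha>"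
  using nth_quant_error_P_le[OF assms(3-5)] assms(6) distortion_P_eq[OF assms(1,2)] by linarith

section \<open>Lower bounds by the layer-cake formula\<close>

lemma nn_integral_Icc_deriv_power2:
  fixes d :: real
  assumes "0 \<le> d"
  shows "(\<integral>\<^sup>+t\<in>{0..d}. ennreal (2 * t) \<partial>lborel) = ennreal (d\<^sup>2)"
proof -
  have "((\<lambda>t. 2 * t) has_integral d\<^sup>2 - 0\<^sup>2) {0..d}"
    using assms by (intro fundamental_theorem_of_calculus)
      (auto intro!: derivative_eq_intros simp flip: has_real_derivative_iff_has_vector_derivative)
  then have "(\<integral>\<^sup>+t. ennreal (indicator {0..d} t * (2 * t)) \<partial>lborel) = ennreal (d\<^sup>2)"
    by (intro nn_integral_has_integral_lebesgue) auto
  then show ?thesis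
    by (simp add: indicator_mult_ennreal mult.commute)
qed

lemma ennreal_measure_le_emeasure: "ennreal (measure M A) \<le> emeasure M A"
  unfolding measure_def ennreal_enn2real_if by simp

lemma nn_integral_power2_layer_cake:
  fixes f :: "real \<Rightarrow> real"
  assumes [measurable]: "f \<in> borel_measurable borel" "A \<in> sets borel"
    and nonneg: "\<And>x. 0 \<le> f x"
  shows "(\<integral>\<^sup>+x\<in>A. ennreal ((f x)\<^sup>2) \<partial>lborel)
           = (\<integral>\<^sup>+t\<in>{0..}. ennreal (2 * t) * emeasure lborel {x\<in>A. t \<le> f x} \<partial>lborel)"
proof -
  let ?g = "\<lambda>x t. ennreal (2 * t) * indicator {0..f x} t * indicator A x"
  have "(\<integral>\<^sup>+x\<in>A. ennreal ((f x)\<^sup>2) \<partial>lborel) = (\<integral>\<^sup>+x. (\<integral>\<^sup>+t. ?g x t \<partial>lborel) \<partial>lborel)"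
    using nonneg by (intro nn_integral_cong) (simp add: nn_integral_Icc_deriv_power2 nn_integral_multc)
  also have "\<dots> = (\<integral>\<^sup>+t. (\<integral>\<^sup>+x. ?g x t \<partial>lborel) \<partial>lborel)"
    by (rule lborel_pair.Fubini'[symmetric]) (auto simp: case_prod_unfold indicator_def)
  also have "\<dots> = (\<integral>\<^sup>+t\<in>{0..}. ennreal (2 * t) * emeasure lborel {x\<in>A. t \<le> f x} \<partial>lborel)"
  proof (intro nn_integral_cong)
    fix t :: real
    have "(\<integral>\<^sup>+x. ?g x t \<partial>lborel)
        = (\<integral>\<^sup>+x. (ennreal (2 * t) * indicator {0..} t) * indicator {x\<in>A. t \<le> f x} x \<partial>lborel)"
      by (intro nn_integral_cong) (auto simp: indicator_def)
    also have "\<dots> = (ennreal (2 * t) * indicator {0..} t) * emeasure lborel {x\<in>A. t \<le> f x}"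
      by (intro nn_integral_cmult_indicator) measurable
    finally show "(\<integral>\<^sup>+x. ?g x t \<partial>lborel) = ennreal (2 * t) * emeasure lborel {x\<in>A. t \<le> f x} * indicator {0..} t"
      by (simp add: mult_ac)
  qed
  finally show ?thesis .
qed

lemma nn_integral_power2_ge_layers:
  fixes f \<phi> :: "real \<Rightarrow> real"
  assumes "f \<in> borel_measurable borel" "A \<in> sets borel" "\<And>x. 0 \<le> f x"
    and \<phi>: "\<And>t. 0 \<le> t \<Longrightarrow> \<phi> t \<le> measure lborel {x\<in>A. t < f x}"
  shows "(\<integral>\<^sup>+t\<in>{0..}. ennreal (2 * t * \<phi> t) \<partial>lborel) \<le> (\<integral>\<^sup>+x\<in>A. ennreal ((f x)\<^sup>2) \<partial>lborel)"
  unfolding nn_integral_power2_layer_cake[OF assms(1-3)]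
proof (intro nn_integral_mono)
  fix t :: real
  show "ennreal (2 * t * \<phi> t) * indicator {0..} t
          \<le> ennreal (2 * t) * emeasure lborel {x\<in>A. t \<le> f x} * indicator {0..} t"
  proof (cases "0 \<le> t \<and> 0 \<le> \<phi> t")
    case True
    note [measurable] = assms(1,2)
    have "ennreal (\<phi> t) \<le> ennreal (measure lborel {x\<in>A. t < f x})"
      using \<phi> True by (simp add: ennreal_leI)
    also have "\<dots> \<le> emeasure lborel {x\<in>A. t < f x}"
      by (rule ennreal_measure_le_emeasure)
    also have "\<dots> \<le> emeasure lborel {x\<in>A. t \<le> f x}"
      by (intro emeasure_mono) auto
    finally have "ennreal (2 * t) * ennreal (\<phi> t) \<le> ennreal (2 * t) * emeasure lborel {x\<in>A. t \<le> f x}"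
      by (rule mult_left_mono) simp
    then show ?thesis
      using True by (simp add: ennreal_mult)
  next
    case False
    then have "ennreal (2 * t * \<phi> t) * indicator {0..} t = 0"
      by (cases "0 \<le> t") (simp_all add: ennreal_neg mult_nonneg_nonpos)
    then show ?thesis by (simp only: zero_le)
  qed
qed

lemma nn_integral_positive_part_eq:
  fixes g :: "real \<Rightarrow> real"
  assumes "(g has_integral I) {0..b}"
    and "\<And>t. 0 \<le> t \<Longrightarrow> t \<le> b \<Longrightarrow> 0 \<le> g t" and "\<And>t. b < t \<Longrightarrow> g t \<le> 0"
  shows "(\<integral>\<^sup>+t\<in>{0..}. ennreal (g t) \<partial>lborel) = ennreal I"
proof -
  have "(\<integral>\<^sup>+t\<in>{0..}. ennreal (g t) \<partial>lborel) = (\<integral>\<^sup>+t. ennreal (indicator {0..b} t * g t) \<partial>lborel)"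
    using assms(3) by (intro nn_integral_cong) (auto simp: indicator_def ennreal_neg not_le)
  also have "\<dots> = ennreal I"
    using assms(1,2) by (intro nn_integral_has_integral_lebesgue) auto
  finally show ?thesis .
qed

lemma nn_integral_linear_layers:
  assumes "0 \<le> L" "0 < e"
  shows "(\<integral>\<^sup>+t\<in>{0..}. ennreal (2 * t * (L - e * t)) \<partial>lborel) = ennreal (half_cell_bound L e)"
proof (rule nn_integral_positive_part_eq)
  have "((\<lambda>t. 2 * t * (L - e * t)) has_integral
          (L * (L/e)\<^sup>2 - 2/3 * e * (L/e) ^ 3) - (L * 0\<^sup>2 - 2/3 * e * 0 ^ 3)) {0..L/e}"
    using assms by (intro fundamental_theorem_of_calculus)
      (auto intro!: derivative_eq_intros simp flip: has_real_derivative_iff_has_vector_derivative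
            simp: algebra_simps power2_eq_square power3_eq_cube)
  then show "((\<lambda>t. 2 * t * (L - e * t)) has_integral half_cell_bound L e) {0..L/e}"
    using assms by (simp add: half_cell_bound_def field_simps power2_eq_square power3_eq_cube)
  show "0 \<le> 2 * t * (L - e * t)" if "0 \<le> t" "t \<le> L/e" for t
    using that assms by (intro mult_nonneg_nonneg) (auto simp: field_simps)
  show "2 * t * (L - e * t) \<le> 0" if "L/e < t" for t
  proof -
    have "0 < t"
      using that assms by (meson divide_nonneg_pos le_less_trans)
    with that assms show ?thesis
      by (intro mult_nonneg_nonpos) (auto simp: field_simps)
  qed
qed

lemma nn_integral_single_point_layers:
  "(\<integral>\<^sup>+t\<in>{0..}. ennreal (2 * t * (1/2 - 2 * t - max 0 (t - 1/8))) \<partial>lborel) = ennreal (29/3456)"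
proof (rule nn_integral_positive_part_eq)
  let ?g = "\<lambda>t::real. 2 * t * (1/2 - 2 * t - max 0 (t - 1/8))"
  have "(?g has_integral ((1/8)\<^sup>2/2 - 4/3 * (1/8) ^ 3) - (0\<^sup>2/2 - 4/3 * 0 ^ 3)) {0..1/8}"
    by (intro fundamental_theorem_of_calculus)
      (auto intro!: derivative_eq_intros simp flip: has_real_derivative_iff_has_vector_derivative
            simp: algebra_simps power2_eq_square power3_eq_cube)
  moreover have "(?g has_integral (5/8 * (5/24)\<^sup>2 - 2 * (5/24) ^ 3) - (5/8 * (1/8)\<^sup>2 - 2 * (1/8) ^ 3)) {1/8..5/24}"
    by (intro fundamental_theorem_of_calculus)
      (auto intro!: derivative_eq_intros simp flip: has_real_derivative_iff_has_vector_derivative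
            simp: algebra_simps power2_eq_square power3_eq_cube)
  ultimately have "(?g has_integral (1/192 + 11/3456)) {0..5/24}"
    by (intro has_integral_combine) (simp_all add: power2_eq_square power3_eq_cube)
  then show "(?g has_integral 29/3456) {0..5/24}"
    by simp
  show "0 \<le> ?g t" if "0 \<le> t" "t \<le> 5/24" for t
    using that by (auto simp: max_def)
  show "?g t \<le> 0" if "5/24 < t" for t
    using that by (intro mult_nonneg_nonpos) (auto simp: max_def)
qed

lemma infdist_le_subset_cover:
  fixes \<beta> :: "real set" and p q t dl dh :: real
  assumes "finite \<beta>" "\<beta> \<noteq> {}"
    and left: "\<And>b. b \<in> \<beta> \<Longrightarrow> b < p \<Longrightarrow> b \<le> p - dl"
    and right: "\<And>b. b \<in> \<beta> \<Longrightarrow> q < b \<Longrightarrow> q + dh \<le> b"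
  shows "{x\<in>{p..q}. infdist x \<beta> \<le> t}
           \<subseteq> (\<Union>b\<in>\<beta> \<inter> {p..q}. {b - t..b + t}) \<union> {p..p + max 0 (t - dl)} \<union> {q - max 0 (t - dh)..q}"
proof
  fix x assume x: "x \<in> {x\<in>{p..q}. infdist x \<beta> \<le> t}"
  obtain b where b: "b \<in> \<beta>" "infdist x \<beta> = dist x b"
    using infdist_attains_inf[OF finite_imp_closed] assms(1,2) by metis
  consider "b < p" | "q < b" | "b \<in> {p..q}" by fastforce
  then show "x \<in> (\<Union>b\<in>\<beta> \<inter> {p..q}. {b - t..b + t}) \<union> {p..p + max 0 (t - dl)} \<union> {q - max 0 (t - dh)..q}"
  proof cases
    case 1
    then show ?thesis using left[OF b(1)] b x by (auto simp: dist_real_def)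
  next
    case 2
    then show ?thesis using right[OF b(1)] b x by (auto simp: dist_real_def)
  next
    case 3
    have "x \<in> {b - t..b + t}"
      using b x by (auto simp: dist_real_def abs_le_iff)
    then show ?thesis using 3 b(1) by auto
  qed
qed

lemma measure_infdist_le_le:
  fixes \<beta> :: "real set" and p q t dl dh :: real
  assumes "finite \<beta>" "\<beta> \<noteq> {}" "0 \<le> t"
    and "\<And>b. b \<in> \<beta> \<Longrightarrow> b < p \<Longrightarrow> b \<le> p - dl"
    and "\<And>b. b \<in> \<beta> \<Longrightarrow> q < b \<Longrightarrow> q + dh \<le> b"
  shows "measure lborel {x\<in>{p..q}. infdist x \<beta> \<le> t}
           \<le> 2 * t * card (\<beta> \<inter> {p..q}) + max 0 (t - dl) + max 0 (t - dh)"
proof -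
  define C where "C = (\<Union>b\<in>\<beta> \<inter> {p..q}. {b - t..b + t})"
  define Lo where "Lo = {p..p + max 0 (t - dl)}"
  define Hi where "Hi = {q - max 0 (t - dh)..q}"
  have C: "C \<in> sets lborel"
    unfolding C_def using assms(1) by (intro sets.finite_UN) auto
  then have "emeasure lborel {x\<in>{p..q}. infdist x \<beta> \<le> t} \<le> emeasure lborel (C \<union> Lo \<union> Hi)"
    using infdist_le_subset_cover[OF assms(1,2,4,5), of t] unfolding C_def Lo_def Hi_def
    by (intro emeasure_mono) auto
  also have "\<dots> \<le> emeasure lborel C + emeasure lborel Lo + emeasure lborel Hi"
    by (intro order_trans[OF emeasure_subadditive add_right_mono[OF emeasure_subadditive]])
       (use C in \<open>auto simp: Lo_def Hi_def\<close>)
  also have "\<dots> \<le> ennreal (2 * t * card (\<beta> \<inter> {p..q})) + ennreal (max 0 (t - dl)) + ennreal (max 0 (t - dh))"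
  proof (intro add_mono)
    have "emeasure lborel C \<le> (\<Sum>b\<in>\<beta> \<inter> {p..q}. emeasure lborel {b - t..b + t})"
      unfolding C_def using assms(1) by (intro emeasure_subadditive_finite) auto
    also have "\<dots> = ennreal (2 * t * card (\<beta> \<inter> {p..q}))"
      using assms(3) by (simp add: ennreal_of_nat_eq_real_of_nat ennreal_mult'[symmetric] mult_ac)
    finally show "emeasure lborel C \<le> ennreal (2 * t * card (\<beta> \<inter> {p..q}))" .
  qed (simp_all add: Lo_def Hi_def)
  also have "\<dots> = ennreal (2 * t * card (\<beta> \<inter> {p..q}) + max 0 (t - dl) + max 0 (t - dh))"
    using assms(3)
    by (simp only: ennreal_plus add_nonneg_nonneg max.cobounded1 mult_nonneg_nonneg of_nat_0_le_iff
                   zero_le_numeral)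
  finally show ?thesis
    unfolding measure_def using assms(3) by (intro enn2real_leI) auto
qed

lemma measure_infdist_gt_ge:
  fixes \<beta> :: "real set" and p q t dl dh :: real
  assumes "finite \<beta>" "\<beta> \<noteq> {}" "0 \<le> t" "p \<le> q"
    and "\<And>b. b \<in> \<beta> \<Longrightarrow> b < p \<Longrightarrow> b \<le> p - dl"
    and "\<And>b. b \<in> \<beta> \<Longrightarrow> q < b \<Longrightarrow> q + dh \<le> b"
  shows "q - p - (2 * t * card (\<beta> \<inter> {p..q}) + max 0 (t - dl) + max 0 (t - dh))
           \<le> measure lborel {x\<in>{p..q}. t < infdist x \<beta>}"
proof -
  have eq: "{x\<in>{p..q}. t < infdist x \<beta>} = {p..q} - {x\<in>{p..q}. infdist x \<beta> \<le> t}"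
    by auto
  have "measure lborel {x\<in>{p..q}. t < infdist x \<beta>} = q - p - measure lborel {x\<in>{p..q}. infdist x \<beta> \<le> t}"
    unfolding eq using assms(4) by (subst measure_Diff) auto
  then show ?thesis
    using measure_infdist_le_le[OF assms(1-3,5,6)] by linarith
qed

lemma interval_error_ge_layers:
  assumes "\<And>t. 0 \<le> t \<Longrightarrow> \<phi> t \<le> measure lborel {x\<in>{p..q}. t < infdist x \<beta>}"
  shows "(\<integral>\<^sup>+t\<in>{0..}. ennreal (2 * t * \<phi> t) \<partial>lborel) \<le> ennreal (interval_error \<beta> p q)"
  unfolding ennreal_interval_error using assms infdist_nonneg
  by (intro nn_integral_power2_ge_layers) auto

lemma interval_error_ge_linear_layers:
  assumes "p \<le> q" "0 < e"
    and "\<And>t. 0 \<le> t \<Longrightarrow> q - p - e * t \<le> measure lborel {x\<in>{p..q}. t < infdist x \<beta>}"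
  shows "half_cell_bound (q - p) e \<le> interval_error \<beta> p q"
  using interval_error_ge_layers[of "\<lambda>t. q - p - e * t", OF assms(3)]
    nn_integral_linear_layers[of "q - p" e] assms(1,2) interval_error_nonneg[of \<beta> p q]
  by simp

lemma interval_error_ge_half_cells:
  fixes \<beta> :: "real set"
  assumes "finite \<beta>" "\<beta> \<noteq> {}" "p \<le> q"
  shows "half_cell_bound (q - p) (2 * real (card (\<beta> \<inter> {p..q})) + of_bool (\<exists>b\<in>\<beta>. b < p) + of_bool (\<exists>b\<in>\<beta>. q < b))
           \<le> interval_error \<beta> p q"
proof (rule interval_error_ge_linear_layers[OF assms(3)])
  let ?lo = "\<exists>b\<in>\<beta>. b < p" and ?hi = "\<exists>b\<in>\<beta>. q < b"
  have "\<beta> \<inter> {p..q} \<noteq> {} \<or> ?lo \<or> ?hi"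
    using assms(2) by force
  then show "0 < 2 * real (card (\<beta> \<inter> {p..q})) + of_bool ?lo + of_bool ?hi"
    using assms(1) by (auto simp: card_gt_0_iff)
  fix t :: real assume "0 \<le> t"
  \<comment> \<open>a missing neighbour is modelled by a fictitious distance \<open>t\<close>, which costs nothing\<close>
  have "q - p - (2 * t * card (\<beta> \<inter> {p..q}) + max 0 (t - (if ?lo then 0 else t)) + max 0 (t - (if ?hi then 0 else t)))
          \<le> measure lborel {x\<in>{p..q}. t < infdist x \<beta>}"
    using \<open>0 \<le> t\<close> by (intro measure_infdist_gt_ge assms) auto
  moreover have "max 0 (t - (if P then 0 else t)) = of_bool P * t" for P
    using \<open>0 \<le> t\<close> by simp
  ultimately show "q - p - (2 * real (card (\<beta> \<inter> {p..q})) + of_bool ?lo + of_bool ?hi) * t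
                     \<le> measure lborel {x\<in>{p..q}. t < infdist x \<beta>}"
    by (simp add: algebra_simps)
qed

lemma interval_error_ge_far_neighbours:
  fixes \<beta> :: "real set" and p q :: real
  defines "k \<equiv> card (\<beta> \<inter> {p..q})"
  assumes "finite \<beta>" "p \<le> q" "0 < k"
    and "\<And>b. b \<in> \<beta> \<Longrightarrow> b < p \<Longrightarrow> b \<le> p - (q - p) / (2 * real k)"
    and "\<And>b. b \<in> \<beta> \<Longrightarrow> q < b \<Longrightarrow> q + (q - p) / (2 * real k) \<le> b"
  shows "half_cell_bound (q - p) (2 * real k) \<le> interval_error \<beta> p q"
proof (rule interval_error_ge_linear_layers[OF assms(3)])
  show "0 < 2 * real k" using assms(4) by simp
  have "\<beta> \<noteq> {}" using assms(4) by (auto simp: k_def)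
  fix t :: real assume "0 \<le> t"
  show "q - p - 2 * real k * t \<le> measure lborel {x\<in>{p..q}. t < infdist x \<beta>}"
  proof (cases "t \<le> (q - p) / (2 * real k)")
    case True
    then show ?thesis
      using measure_infdist_gt_ge[OF assms(2) \<open>\<beta> \<noteq> {}\<close> \<open>0 \<le> t\<close> assms(3,5,6)]
      by (simp add: k_def mult_ac)
  next
    case False
    then have "q - p - 2 * real k * t < 0"
      using assms(4) by (simp add: field_simps)
    then show ?thesis
      using measure_nonneg[of lborel "{x\<in>{p..q}. t < infdist x \<beta>}"] by linarith
  qed
qed

lemma interval_error_ge_single_point:
  fixes \<beta> :: "real set"
  assumes "finite \<beta>" "card (\<beta> \<inter> {0..1/2}) = 1"
    and "\<And>b. b \<in> \<beta> \<Longrightarrow> 0 \<le> b" and "\<And>b. b \<in> \<beta> \<Longrightarrow> 1/2 < b \<Longrightarrow> 5/8 \<le> b"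
  shows "29/3456 \<le> interval_error \<beta> 0 (1/2)"
proof -
  have "\<beta> \<noteq> {}" using assms(2) by auto
  have "1/2 - 2 * t - max 0 (t - 1/8) \<le> measure lborel {x\<in>{0..1/2}. t < infdist x \<beta>}" if "0 \<le> t" for t
    using measure_infdist_gt_ge[OF assms(1) \<open>\<beta> \<noteq> {}\<close> that, of 0 "1/2" t "1/8"] that assms(2-4)
    by (force simp: not_less[symmetric])
  from interval_error_ge_layers[OF this] show ?thesis
    using nn_integral_single_point_layers interval_error_nonneg[of \<beta> 0 "1/2"] by simp
qed

lemma interval_error_ge_all_left:
  fixes \<beta> :: "real set"
  assumes "\<beta> \<noteq> {}" "\<And>b. b \<in> \<beta> \<Longrightarrow> b \<le> c" "c \<le> p" "p \<le> q"
  shows "((q - c) ^ 3 - (p - c) ^ 3) / 3 \<le> interval_error \<beta> p q"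
proof -
  have "x - c \<le> infdist x \<beta>" for x
  proof -
    have "x - c \<le> dist x b" if "b \<in> \<beta>" for b
      unfolding dist_real_def using assms(2)[OF that] abs_ge_self[of "x - b"] by linarith
    then show ?thesis
      unfolding infdist_notempty[OF assms(1)] using assms(1) by (intro cINF_greatest) auto
  qed
  then have "(x - c)\<^sup>2 \<le> (infdist x \<beta>)\<^sup>2" if "p \<le> x" for x
    using that assms(3) by (intro power_mono) auto
  then have "(\<integral>x\<in>{p..q}. (x - c)\<^sup>2 \<partial>lborel) \<le> interval_error \<beta> p q"
    unfolding interval_error_def
    by (intro set_integral_mono set_integrable_infdist_power2 borel_integrable_atLeastAtMost' continuous_intros)
       auto
  then show ?thesis
    using assms(4) by (simp add: set_integral_power2_diff)
qed

lemma interval_error_left_ge_far: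
  fixes \<alpha> :: "real set"
  assumes "finite \<alpha>" "2 \<le> card (\<alpha> \<inter> {0..1/2})"
    and "\<And>b. b \<in> \<alpha> \<Longrightarrow> 0 \<le> b" and "\<And>b. b \<in> \<alpha> \<Longrightarrow> 1/2 < b \<Longrightarrow> 5/8 \<le> b"
  shows "half_cell_bound (1/2) (2 * real (card (\<alpha> \<inter> {0..1/2}))) \<le> interval_error \<alpha> 0 (1/2)"
proof -
  have d: "(1/2 - 0) / (2 * real (card (\<alpha> \<inter> {0..1/2}))) \<le> 1/8"
    using assms(2) by (simp add: field_simps)
  have "half_cell_bound (1/2 - 0) (2 * real (card (\<alpha> \<inter> {0..1/2}))) \<le> interval_error \<alpha> 0 (1/2)"
  proof (rule interval_error_ge_far_neighbours[OF assms(1)])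
    show "b \<le> 0 - (1/2 - 0) / (2 * real (card (\<alpha> \<inter> {0..1/2})))" if "b \<in> \<alpha>" "b < 0" for b
      using assms(3)[OF that(1)] that(2) by simp
    show "1/2 + (1/2 - 0) / (2 * real (card (\<alpha> \<inter> {0..1/2}))) \<le> b" if "b \<in> \<alpha>" "1/2 < b" for b
      using assms(4)[OF that] d by linarith
  qed (use assms(2) in auto)
  then show ?thesis by simp
qed

lemma interval_error_right_ge_far:
  fixes \<alpha> :: "real set"
  assumes "finite \<alpha>" "1 \<le> card (\<alpha> \<inter> {3/4..1})"
    and "\<And>b. b \<in> \<alpha> \<Longrightarrow> b \<le> 1" and "\<And>b. b \<in> \<alpha> \<Longrightarrow> b < 3/4 \<Longrightarrow> b \<le> 5/8"
  shows "half_cell_bound (1/4) (2 * real (card (\<alpha> \<inter> {3/4..1}))) \<le> interval_error \<alpha> (3/4) 1"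
proof -
  have d: "(1 - 3/4) / (2 * real (card (\<alpha> \<inter> {3/4..1}))) \<le> 1/8"
    using assms(2) by (simp add: field_simps)
  have "half_cell_bound (1 - 3/4) (2 * real (card (\<alpha> \<inter> {3/4..1}))) \<le> interval_error \<alpha> (3/4) 1"
  proof (rule interval_error_ge_far_neighbours[OF assms(1)])
    show "b \<le> 3/4 - (1 - 3/4) / (2 * real (card (\<alpha> \<inter> {3/4..1})))" if "b \<in> \<alpha>" "b < 3/4" for b
      using assms(4)[OF that] d by linarith
    show "1 + (1 - 3/4) / (2 * real (card (\<alpha> \<inter> {3/4..1}))) \<le> b" if "b \<in> \<alpha>" "1 < b" for b
      using assms(3)[OF that(1)] that(2) by simp
  qed (use assms(2) in auto)
  then show ?thesis by simp
qed

section \<open>A point in the gap is never optimal\<close>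

lemma card_parts_le:
  fixes \<alpha> :: "real set"
  assumes "finite \<alpha>"
  shows "card (\<alpha> \<inter> {0..1/2}) + card (\<alpha> \<inter> {3/4..1}) + card (\<alpha> \<inter> {1/2<..<3/4})
           + of_bool (\<exists>b\<in>\<alpha>. b < 0) + of_bool (\<exists>b\<in>\<alpha>. 1 < b) \<le> card \<alpha>"
proof -
  have "of_bool (\<exists>b\<in>\<alpha>. b < 0) \<le> card (\<alpha> \<inter> {..<0})" "of_bool (\<exists>b\<in>\<alpha>. 1 < b) \<le> card (\<alpha> \<inter> {1<..})"
    using assms by (auto simp: Suc_le_eq card_gt_0_iff)
  moreover have "card (\<alpha> \<inter> {0..1/2}) + card (\<alpha> \<inter> {3/4..1}) + card (\<alpha> \<inter> {1/2<..<3/4})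
      + card (\<alpha> \<inter> {..<0}) + card (\<alpha> \<inter> {1<..})
      = card ((\<alpha> \<inter> {0..1/2}) \<union> (\<alpha> \<inter> {3/4..1}) \<union> (\<alpha> \<inter> {1/2<..<3/4}) \<union> (\<alpha> \<inter> {..<0}) \<union> (\<alpha> \<inter> {1<..}))"
    using assms by (simp add: card_Un_disjoint disjoint_iff)
  moreover have "card ((\<alpha> \<inter> {0..1/2}) \<union> (\<alpha> \<inter> {3/4..1}) \<union> (\<alpha> \<inter> {1/2<..<3/4}) \<union> (\<alpha> \<inter> {..<0}) \<union> (\<alpha> \<inter> {1<..})) \<le> card \<alpha>"
    using assms by (intro card_mono) auto
  ultimately show ?thesis by linarith
qed

lemma interval_error_left_ge_gap_point:
  fixes \<alpha> :: "real set"
  assumes "finite \<alpha>" "a \<in> \<alpha>" "1/2 < a"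
  shows "half_cell_bound (1/2) (2 * real (card (\<alpha> \<inter> {0..1/2})) + of_bool (\<exists>b\<in>\<alpha>. b < 0) + 1)
           \<le> interval_error \<alpha> 0 (1/2)"
proof -
  have "\<alpha> \<noteq> {}" "\<exists>b\<in>\<alpha>. 1/2 < b"
    using assms(2,3) by auto
  with interval_error_ge_half_cells[OF assms(1), of 0 "1/2"] show ?thesis
    by simp
qed

lemma interval_error_right_ge_gap_point:
  fixes \<alpha> :: "real set"
  assumes "finite \<alpha>" "a \<in> \<alpha>" "a < 3/4"
  shows "half_cell_bound (1/4) (2 * real (card (\<alpha> \<inter> {3/4..1})) + 1 + of_bool (\<exists>b\<in>\<alpha>. 1 < b))
           \<le> interval_error \<alpha> (3/4) 1"
proof -
  have "\<alpha> \<noteq> {}" "\<exists>b\<in>\<alpha>. b < 3/4"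
    using assms(2,3) by auto
  with interval_error_ge_half_cells[OF assms(1), of "3/4" 1] show ?thesis
    by simp
qed

lemma nth_quant_error_P_less_if_extra_point:
  fixes \<alpha> :: "real set"
  assumes "finite \<alpha>" "card \<alpha> \<le> n" "a \<in> \<alpha>" "1/2 < a" "a < 3/4"
    and extra: "(\<exists>b\<in>\<alpha>. b < 0) \<or> (\<exists>b\<in>\<alpha>. 1 < b) \<or> 2 \<le> card (\<alpha> \<inter> {1/2<..<3/4})"
  shows "nth_quant_error P n < distortion P \<alpha>"
proof -
  define kA where "kA = card (\<alpha> \<inter> {0..1/2})"
  define kB where "kB = card (\<alpha> \<inter> {3/4..1})"
  define lo where "lo = (\<exists>b\<in>\<alpha>. b < 0)"
  define hi where "hi = (\<exists>b\<in>\<alpha>. 1 < b)"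
  define eA where "eA = 2 * real kA + of_bool lo + 1"
  define eB where "eB = 2 * real kB + 1 + of_bool hi"
  \<comment> \<open>the (at least two, or three if both \<open>lo\<close> and \<open>hi\<close>) outside points are moved into the intervals\<close>
  define k1 where "k1 = kA + 1 + of_bool (lo \<and> hi)"
  define k2 where "k2 = kB + 1"
  have "\<alpha> \<noteq> {}" using assms(3) by auto
  have "1 \<le> card (\<alpha> \<inter> {1/2<..<3/4})"
    using assms(1,3-5) by (auto simp: Suc_le_eq card_gt_0_iff)
  moreover have "kA + kB + card (\<alpha> \<inter> {1/2<..<3/4}) + of_bool lo + of_bool hi \<le> card \<alpha>"
    using card_parts_le[OF assms(1)] unfolding kA_def kB_def lo_def hi_def .
  ultimately have "k1 + k2 \<le> n"
    using assms(2) extra unfolding k1_def k2_def lo_def[symmetric] hi_def[symmetric]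
    by (cases lo; cases hi) auto
  then have "nth_quant_error P n \<le> 3/2 * half_cell_bound (1/2) (2 * real k1) + half_cell_bound (1/4) (2 * real k2)"
    by (intro nth_quant_error_P_le) (auto simp: k1_def k2_def)
  also have "\<dots> < 3/2 * half_cell_bound (1/2) eA + half_cell_bound (1/4) eB"
  proof -
    have "eA \<le> 2 * real k1" "eB \<le> 2 * real k2" "eA < 2 * real k1 \<or> eB < 2 * real k2"
      unfolding eA_def eB_def k1_def k2_def by auto
    moreover have "0 < eA" "0 < eB"
      unfolding eA_def eB_def by auto
    ultimately show ?thesis
      using half_cell_bound_antimono[of eA "2 * real k1" "1/2"] half_cell_bound_antimono[of eB "2 * real k2" "1/4"]
        half_cell_bound_strict_antimono[of eA "2 * real k1" "1/2"] half_cell_bound_strict_antimono[of eB "2 * real k2" "1/4"]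
      by auto
  qed
  also have "\<dots> \<le> 3/2 * interval_error \<alpha> 0 (1/2) + interval_error \<alpha> (3/4) 1"
    using interval_error_left_ge_gap_point[OF assms(1,3,4)] interval_error_right_ge_gap_point[OF assms(1,3,5)]
    unfolding eA_def eB_def kA_def kB_def lo_def hi_def by simp
  also have "\<dots> = distortion P \<alpha>"
    using distortion_P_eq[OF assms(1) \<open>\<alpha> \<noteq> {}\<close>] by simp
  finally show ?thesis .
qed

lemma lone_gap_point_bounds:
  fixes \<alpha> :: "real set"
  assumes "finite \<alpha>" "a \<in> \<alpha>" "1/2 < a" "a < 3/4" and sub: "\<alpha> \<subseteq> {0..1/2} \<union> {a} \<union> {3/4..1}"
  shows "card (\<alpha> \<inter> {0..1/2}) + card (\<alpha> \<inter> {3/4..1}) + 1 \<le> card \<alpha>"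
    and "half_cell_bound (1/2) (2 * real (card (\<alpha> \<inter> {0..1/2})) + 1) \<le> interval_error \<alpha> 0 (1/2)"
    and "half_cell_bound (1/4) (2 * real (card (\<alpha> \<inter> {3/4..1})) + 1) \<le> interval_error \<alpha> (3/4) 1"
proof -
  have "1 \<le> card (\<alpha> \<inter> {1/2<..<3/4})"
    using assms(1-4) by (auto simp: Suc_le_eq card_gt_0_iff)
  then show "card (\<alpha> \<inter> {0..1/2}) + card (\<alpha> \<inter> {3/4..1}) + 1 \<le> card \<alpha>"
    using card_parts_le[OF assms(1)] by linarith
  have outside: "\<not> (\<exists>b\<in>\<alpha>. b < 0)" "\<not> (\<exists>b\<in>\<alpha>. 1 < b)"
    using sub assms(3,4) by force+
  then show "half_cell_bound (1/2) (2 * real (card (\<alpha> \<inter> {0..1/2})) + 1) \<le> interval_error \<alpha> 0 (1/2)"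
    and "half_cell_bound (1/4) (2 * real (card (\<alpha> \<inter> {3/4..1})) + 1) \<le> interval_error \<alpha> (3/4) 1"
    using interval_error_left_ge_gap_point[OF assms(1-3)] interval_error_right_ge_gap_point[OF assms(1,2,4)]
    by simp_all
qed

lemma nth_quant_error_P_less_if_lone_upper_gap_point_few_left:
  fixes \<alpha> :: "real set"
  assumes "finite \<alpha>" "card \<alpha> \<le> n" "2 \<le> n" "a \<in> \<alpha>" "5/8 \<le> a" "a < 3/4"
    and sub: "\<alpha> \<subseteq> {0..1/2} \<union> {a} \<union> {3/4..1}" and few: "card (\<alpha> \<inter> {0..1/2}) \<le> 1"
  shows "nth_quant_error P n < distortion P \<alpha>"
proof -
  define kA where "kA = card (\<alpha> \<inter> {0..1/2})"
  define kB where "kB = card (\<alpha> \<inter> {3/4..1})"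
  have "\<alpha> \<noteq> {}" "1/2 < a" using assms(4,5) by auto
  note bounds = lone_gap_point_bounds[OF assms(1,4) \<open>1/2 < a\<close> assms(6) sub, folded kA_def kB_def]
  note A = bounds(2) and B = bounds(3)
  have card: "kA + kB + 1 \<le> n" using bounds(1) assms(2) by linarith
  show ?thesis
  proof (cases "kA = 1 \<and> kB = 0")
    case True
    have "29/3456 \<le> interval_error \<alpha> 0 (1/2)"
      using True sub assms(5) by (intro interval_error_ge_single_point[OF assms(1)]) (force simp: kA_def)+
    then have "3/2 * half_cell_bound (1/2) (2 * real (1::nat)) + half_cell_bound (1/4) (2 * real (1::nat))
        < 3/2 * interval_error \<alpha> 0 (1/2) + interval_error \<alpha> (3/4) 1"
      using B True by (simp add: half_cell_bound_def power_divide)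
    then show ?thesis
      using card True assms(3)
      by (intro nth_quant_error_P_less_distortion[OF assms(1) \<open>\<alpha> \<noteq> {}\<close>, of 1 1]) auto
  next
    case False
    have "kA = 0 \<or> kA = 1"
      using few unfolding kA_def by linarith
    have "3/2 * half_cell_bound (1/2) (2 * real (kA + 1)) + half_cell_bound (1/4) (2 * real (max kB 1))
        \<le> 3/2 * half_cell_bound (1/2) (2 * real (kA + 1)) + half_cell_bound (1/4) 2"
      by (simp add: half_cell_bound_antimono)
    also have "\<dots> < 3/2 * half_cell_bound (1/2) (2 * real kA + 1)"
      using \<open>kA = 0 \<or> kA = 1\<close> by (auto simp: half_cell_bound_def power_divide)
    also have "\<dots> \<le> 3/2 * interval_error \<alpha> 0 (1/2) + interval_error \<alpha> (3/4) 1"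
      using A interval_error_nonneg[of \<alpha> "3/4" 1] by simp
    finally show ?thesis
      using card False \<open>kA = 0 \<or> kA = 1\<close> assms(3)
      by (intro nth_quant_error_P_less_distortion[OF assms(1) \<open>\<alpha> \<noteq> {}\<close>, of "kA + 1" "max kB 1"]) auto
  qed
qed

lemma nth_quant_error_P_less_if_lone_upper_gap_point:
  fixes \<alpha> :: "real set"
  assumes "finite \<alpha>" "card \<alpha> \<le> n" "2 \<le> n" "a \<in> \<alpha>" "5/8 \<le> a" "a < 3/4"
    and sub: "\<alpha> \<subseteq> {0..1/2} \<union> {a} \<union> {3/4..1}"
  shows "nth_quant_error P n < distortion P \<alpha>"
proof (cases "2 \<le> card (\<alpha> \<inter> {0..1/2})")
  case True
  define kA where "kA = card (\<alpha> \<inter> {0..1/2})"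
  define kB where "kB = card (\<alpha> \<inter> {3/4..1})"
  have "\<alpha> \<noteq> {}" "1/2 < a" using assms(4,5) by auto
  note bounds = lone_gap_point_bounds[OF assms(1,4) \<open>1/2 < a\<close> assms(6) sub, folded kA_def kB_def]
  have "\<And>b. b \<in> \<alpha> \<Longrightarrow> 0 \<le> b" "\<And>b. b \<in> \<alpha> \<Longrightarrow> 1/2 < b \<Longrightarrow> 5/8 \<le> b"
    using sub assms(5) by force+
  with True have "half_cell_bound (1/2) (2 * real kA) \<le> interval_error \<alpha> 0 (1/2)"
    unfolding kA_def by (intro interval_error_left_ge_far[OF assms(1)])
  moreover have "half_cell_bound (1/4) (2 * real (kB + 1)) < half_cell_bound (1/4) (2 * real kB + 1)"
    by (intro half_cell_bound_strict_antimono) auto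
  ultimately show ?thesis
    using bounds(1,3) assms(2) True unfolding kA_def[symmetric]
    by (intro nth_quant_error_P_less_distortion[OF assms(1) \<open>\<alpha> \<noteq> {}\<close>, of kA "kB + 1"]) auto
next
  case False
  then show ?thesis
    using nth_quant_error_P_less_if_lone_upper_gap_point_few_left[OF assms] by simp
qed

lemma nth_quant_error_P_less_if_lone_lower_gap_point:
  fixes \<alpha> :: "real set"
  assumes "finite \<alpha>" "card \<alpha> \<le> n" "2 \<le> n" "a \<in> \<alpha>" "1/2 < a" "a < 5/8"
    and sub: "\<alpha> \<subseteq> {0..1/2} \<union> {a} \<union> {3/4..1}"
  shows "nth_quant_error P n < distortion P \<alpha>"
proof -
  define kA where "kA = card (\<alpha> \<inter> {0..1/2})"
  define kB where "kB = card (\<alpha> \<inter> {3/4..1})"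
  have "\<alpha> \<noteq> {}" "a < 3/4" using assms(4,6) by auto
  note bounds = lone_gap_point_bounds[OF assms(1,4,5) \<open>a < 3/4\<close> sub, folded kA_def kB_def]
  note A = bounds(2)
  have card: "kA + kB + 1 \<le> n" using bounds(1) assms(2) by linarith
  have le_1: "\<And>b. b \<in> \<alpha> \<Longrightarrow> b \<le> 1" and far: "\<And>b. b \<in> \<alpha> \<Longrightarrow> b < 3/4 \<Longrightarrow> b \<le> 5/8"
    using sub assms(6) by force+
  show ?thesis
  proof (cases "kB = 0")
    case False
    have "half_cell_bound (1/2) (2 * real (kA + 1)) < half_cell_bound (1/2) (2 * real kA + 1)"
      by (intro half_cell_bound_strict_antimono) auto
    then show ?thesis
      using interval_error_right_ge_far[OF assms(1) _ le_1 far] A card False unfolding kB_def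
      by (intro nth_quant_error_P_less_distortion[OF assms(1) \<open>\<alpha> \<noteq> {}\<close>, of "kA + 1" kB]) (auto simp: kB_def)
  next
    case True
    then have "b \<le> 5/8" if "b \<in> \<alpha>" for b
      using that le_1 far assms(1) by (force simp: kB_def)
    then have "((1 - 5/8) ^ 3 - (3/4 - 5/8) ^ 3) / 3 \<le> interval_error \<alpha> (3/4) 1"
      using \<open>\<alpha> \<noteq> {}\<close> by (intro interval_error_ge_all_left) auto
    \<comment> \<open>\<open>13/768\<close> is already the whole error of one midpoint in each interval; \<open>E\<^sub>A > 0\<close> makes it strict\<close>
    moreover have "0 < interval_error \<alpha> 0 (1/2)"
      by (rule less_le_trans[OF _ A]) (simp add: half_cell_bound_def)
    ultimately have "3/2 * half_cell_bound (1/2) 2 + half_cell_bound (1/4) 2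
        < 3/2 * interval_error \<alpha> 0 (1/2) + interval_error \<alpha> (3/4) 1"
      by (simp add: half_cell_bound_def power_divide)
    moreover have "3/2 * half_cell_bound (1/2) (2 * real (max kA 1)) + half_cell_bound (1/4) (2 * real (1::nat))
        \<le> 3/2 * half_cell_bound (1/2) 2 + half_cell_bound (1/4) 2"
      by (simp add: half_cell_bound_antimono)
    ultimately show ?thesis
      using card True assms(3)
      by (intro nth_quant_error_P_less_distortion[OF assms(1) \<open>\<alpha> \<noteq> {}\<close>, of "max kA 1" 1]) auto
  qed
qed

lemma nth_quant_error_P_less_if_gap_point:
  fixes \<alpha> :: "real set"
  assumes "finite \<alpha>" "card \<alpha> \<le> n" "2 \<le> n" "a \<in> \<alpha>" "1/2 < a" "a < 3/4"
  shows "nth_quant_error P n < distortion P \<alpha>"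
proof (cases "(\<exists>b\<in>\<alpha>. b < 0) \<or> (\<exists>b\<in>\<alpha>. 1 < b) \<or> 2 \<le> card (\<alpha> \<inter> {1/2<..<3/4})")
  case True
  then show ?thesis
    using nth_quant_error_P_less_if_extra_point[OF assms(1,2,4-6)] by blast
next
  case False
  have "card (\<alpha> \<inter> {1/2<..<3/4}) \<le> Suc 0"
    using False by simp
  then have "\<alpha> \<inter> {1/2<..<3/4} = {a}"
    using assms(1,4-6) by (auto simp: card_le_Suc0_iff_eq)
  then have sub: "\<alpha> \<subseteq> {0..1/2} \<union> {a} \<union> {3/4..1}"
    using False by force
  show ?thesis
  proof (cases "5/8 \<le> a")
    case True
    then show ?thesis
      using nth_quant_error_P_less_if_lone_upper_gap_point[OF assms(1-4) _ assms(6) sub] by blast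
  next
    case False
    then show ?thesis
      using nth_quant_error_P_less_if_lone_lower_gap_point[OF assms(1-5) _ sub] by simp
  qed
qed

theorem proposition3p6:
  fixes n :: nat and \<alpha> :: "real set"
  assumes "n \<ge> 2" and "optimal_n_means P n \<alpha>"
  shows "\<alpha> \<inter> {1/2<..<3/4} = {}"
proof (rule ccontr)
  assume "\<alpha> \<inter> {1/2<..<3/4} \<noteq> {}"
  then obtain a where "a \<in> \<alpha>" "1/2 < a" "a < 3/4" by auto
  moreover have "finite \<alpha>" "card \<alpha> \<le> n" "distortion P \<alpha> = nth_quant_error P n"
    using assms(2) unfolding optimal_n_means_def by auto
  ultimately show False
    using nth_quant_error_P_less_if_gap_point[of \<alpha> n a] assms(1) by linarith
qed

end
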